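(* Let $1\le k\le n-1$ and let $\Sigma=\mathbb{S}^k\times\mathbb{R}^{n-k}\subset\mathbb{R}^{n+1}$ be a self-shrinker. Let $H\subset\mathbb{R}^{n-k}$ be an open half-space whose boundary is an $(n-k-1)$-dimensional linear subspace (through the origin). Then $\mathbb{S}^k\times H\subset\Sigma$ is unstable, i.e. $L$ has a negative eigenvalue with zero boundary data on it.
   Context: $\mathbb{S}^k$ is the round sphere of radius $\sqrt{2k}$ centered at the origin of $\mathbb{R}^{k+1}$, and $\mathbb{S}^k\times\mathbb{R}^{n-k}\subset\mathbb{R}^{k+1}\times\mathbb{R}^{n-k}$. Stability operator: $Lf=\Delta f-\tfrac12\langle\vec x,\nabla f\rangle+(|A|^2+\tfrac12)f$; eigenvalue convention $Lu=-\lambda u$ with $u\in L^2(e^{-|\vec x|^2/4}d\mu)$. A region is stable if it carries a strictly positive function $u$ with $Lu=0$, and unstable otherwise. *)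

theory Defs
  imports "HOL-Analysis.Analysis"
begin

text \<open>Setting. The factor R^(k+1) is modelled by a euclidean space 'a with DIM('a) = k+1,
the factor R^(n-k) by a euclidean space 'b with DIM('b) = n-k. Points of R^(n+1) are
pairs (x,y) :: 'a \<times> 'b.\<close>

definition cyl_rad :: "'a::euclidean_space itself \<Rightarrow> real" where
  "cyl_rad _ = sqrt (2 * (real DIM('a) - 1))"

definition shrinker_cyl :: "('a::euclidean_space \<times> 'b::euclidean_space) set" where
  "shrinker_cyl = {(x, y). norm x = cyl_rad TYPE('a)}"

text \<open>Squared norm of the second fundamental form of the cylinder: k principal
curvatures equal to 1/sqrt(2k), the others zero.\<close>
definition cyl_Asq :: "'a::euclidean_space itself \<Rightarrow> real" where
  "cyl_Asq t = (real DIM('a) - 1) / (cyl_rad t)\<^sup>2"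

text \<open>Ambient derivatives of this extension compute the
intrinsic ones on the cylinder: its Euclidean Laplacian on the cylinder equals the
Laplace--Beltrami operator of the cylinder, and its ambient gradient there is tangential.\<close>
definition hom_ext :: "('a::euclidean_space \<times> 'b::euclidean_space \<Rightarrow> real)
    \<Rightarrow> 'a \<times> 'b \<Rightarrow> real" where
  "hom_ext u p = u (cyl_rad TYPE('a) *\<^sub>R (fst p /\<^sub>R norm (fst p)), snd p)"

definition pderiv_dir :: "('c::euclidean_space \<Rightarrow> real) \<Rightarrow> 'c \<Rightarrow> 'c \<Rightarrow> real" where
  "pderiv_dir f b p = frechet_derivative f (at p) b"

definition laplacian :: "('c::euclidean_space \<Rightarrow> real) \<Rightarrow> 'c \<Rightarrow> real" where
  "laplacian f p = (\<Sum>b\<in>Basis. pderiv_dir (pderiv_dir f b) b p)"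

definition C2_on :: "'c::euclidean_space set \<Rightarrow> ('c \<Rightarrow> real) \<Rightarrow> bool" where
  "C2_on U f \<longleftrightarrow> f differentiable_on U \<and>
     (\<forall>b\<in>Basis. pderiv_dir f b differentiable_on U \<and>
        (\<forall>c\<in>Basis. continuous_on U (pderiv_dir (pderiv_dir f b) c)))"

definition stab_op :: "('a::euclidean_space \<times> 'b::euclidean_space \<Rightarrow> real)
    \<Rightarrow> 'a \<times> 'b \<Rightarrow> real" where
  "stab_op u p = laplacian (hom_ext u) p
      - 1/2 * frechet_derivative (hom_ext u) (at p) p
      + (cyl_Asq TYPE('a) + 1/2) * u p"

text \<open>Cone over a region of the cylinder (open in R^(n+1) if the region is open in it).\<close>
definition cyl_cone :: "('a::euclidean_space \<times> 'b::euclidean_space) set \<Rightarrow> ('a \<times> 'b) set" where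
  "cyl_cone \<Omega> = {(x, y). x \<noteq> 0 \<and> (cyl_rad TYPE('a) *\<^sub>R (x /\<^sub>R norm x), y) \<in> \<Omega>}"

definition stable_region :: "('a::euclidean_space \<times> 'b::euclidean_space) set \<Rightarrow> bool" where
  "stable_region \<Omega> \<longleftrightarrow> (\<exists>u. C2_on (cyl_cone \<Omega>) (hom_ext u) \<and>
       (\<forall>p\<in>\<Omega>. u p > 0 \<and> stab_op u p = 0))"

end

theory Submission
  imports Defs
begin

text \<open>
  Suppose \<open>u > 0\<close> solves \<open>L u = 0\<close> on \<open>\<Omega> = S\<^sup>k \<times> H\<close>. Take a function \<open>\<Phi>\<close> of the
  \<open>\<real>\<^sup>n\<^sup>-\<^sup>k\<close>-coordinate alone and a compact set \<open>Y \<subseteq> H\<close> such that, on \<open>Y\<close>, \<open>\<Phi>\<close> is positive only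
  in the interior of \<open>Y\<close>, where it is a strict subsolution: \<open>L \<Phi> > 0\<close>. Let \<open>c > 0\<close> be the
  maximum of \<open>\<Phi> / u\<close> over \<open>S\<^sup>k \<times> Y\<close>, attained at \<open>p\<close>. As \<open>u\<close> is extended constantly along rays,
  \<open>\<Phi> \<le> c u\<close> on the open cone over the interior of \<open>Y\<close>, so \<open>\<Phi> - c u\<close> has a local maximum \<open>0\<close>
  at \<open>p\<close>: its gradient vanishes and its Laplacian is nonpositive, whence
  \<open>L \<Phi> (p) \<le> c L u (p) = 0\<close>, a contradiction. For \<open>Y\<close> take the slab \<open>1/2 \<le> e \<bullet> y \<le> 8\<close> in the
  direction \<open>e\<close> normal to \<open>\<partial>H\<close>, cut by a solid cylinder around the \<open>e\<close>-axis, and for \<open>\<Phi>\<close> a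
  cubic in \<open>e \<bullet> y\<close> vanishing at \<open>1/2\<close> and \<open>8\<close> times a transverse paraboloid; a large cylinder
  radius makes the contribution of the cubic dominate.
\<close>

lemma has_real_derivative_pderiv_dir:
  fixes f :: "'c::euclidean_space \<Rightarrow> real"
  assumes "f differentiable at (p + s *\<^sub>R b)"
  shows "((\<lambda>r. f (p + r *\<^sub>R b)) has_real_derivative pderiv_dir f b (p + s *\<^sub>R b)) (at s)"
proof -
  let ?D = "frechet_derivative f (at (p + s *\<^sub>R b))"
  have D: "(f has_derivative ?D) (at (p + s *\<^sub>R b))"
    using assms frechet_derivative_works by blast
  interpret D: bounded_linear ?D
    using D by (rule has_derivative_bounded_linear)
  have "((\<lambda>r. p + r *\<^sub>R b) has_derivative (\<lambda>r. r *\<^sub>R b)) (at s)"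
    by (intro derivative_eq_intros) auto
  from has_derivative_compose[OF this D] show ?thesis
    unfolding has_field_derivative_def pderiv_dir_def by (simp add: D.scaleR mult_commute_abs)
qed

lemma second_deriv_nonpos_at_local_max:
  fixes \<phi> \<psi> :: "real \<Rightarrow> real"
  assumes "0 < d"
    and max: "\<And>s. \<bar>s\<bar> < d \<Longrightarrow> \<phi> s \<le> \<phi> 0"
    and \<phi>': "\<And>s. \<bar>s\<bar> < d \<Longrightarrow> (\<phi> has_real_derivative \<psi> s) (at s)"
    and \<psi>': "(\<psi> has_real_derivative D) (at 0)"
  shows "D \<le> 0"
proof (rule ccontr)
  assume "\<not> D \<le> 0"
  then obtain d' where "d' > 0" and \<psi>_inc: "\<And>h. 0 < h \<Longrightarrow> h < d' \<Longrightarrow> \<psi> 0 < \<psi> h"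
    using DERIV_pos_inc_right[OF \<psi>'] by auto
  have "(\<phi> has_real_derivative \<psi> 0) (at 0)"
    using \<phi>' \<open>0 < d\<close> by simp
  moreover have "\<forall>s. \<bar>0 - s\<bar> < d \<longrightarrow> \<phi> s \<le> \<phi> 0"
    using max by simp
  ultimately have "\<psi> 0 = 0"
    using DERIV_local_max \<open>0 < d\<close> by blast
  define \<delta> where "\<delta> = min d d' / 2"
  have \<delta>: "0 < \<delta>" "\<delta> < d" "\<delta> < d'"
    using \<open>0 < d\<close> \<open>d' > 0\<close> by (auto simp: \<delta>_def)
  have "(\<phi> has_real_derivative \<psi> s) (at s)" if "0 \<le> s" "s \<le> \<delta>" for s
    using \<phi>' \<delta> that by simp
  then obtain z where z: "0 < z" "z < \<delta>" "\<phi> \<delta> - \<phi> 0 = \<delta> * \<psi> z"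
    using MVT2[OF \<open>0 < \<delta>\<close>, of \<phi> \<psi>] by auto
  have "\<psi> z > 0"
    using \<psi>_inc[of z] z \<delta> \<open>\<psi> 0 = 0\<close> by simp
  then have "\<phi> \<delta> > \<phi> 0"
    using z(3) \<open>0 < \<delta>\<close> by (metis diff_gt_0_iff_gt mult_pos_pos)
  with max[of \<delta>] \<delta> show False
    by simp
qed

lemma pderiv_dir2_nonpos_at_local_max:
  fixes f :: "'c::euclidean_space \<Rightarrow> real"
  assumes "open W" "p \<in> W" and max: "\<And>q. q \<in> W \<Longrightarrow> f q \<le> f p"
    and f_diff: "\<And>q. q \<in> W \<Longrightarrow> f differentiable at q"
    and "pderiv_dir f b differentiable at p"
  shows "pderiv_dir (pderiv_dir f b) b p \<le> 0"
proof -
  have "open ((\<lambda>s. p + s *\<^sub>R b) -` W)"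
    by (intro open_vimage \<open>open W\<close> continuous_intros)
  moreover have "0 \<in> (\<lambda>s. p + s *\<^sub>R b) -` W"
    using \<open>p \<in> W\<close> by simp
  ultimately obtain d where "d > 0" and "ball 0 d \<subseteq> (\<lambda>s. p + s *\<^sub>R b) -` W"
    by (rule openE)
  then have line: "p + s *\<^sub>R b \<in> W" if "\<bar>s\<bar> < d" for s
    using that by (auto simp: dist_real_def)
  show ?thesis
  proof (rule second_deriv_nonpos_at_local_max[OF \<open>d > 0\<close>])
    show "f (p + s *\<^sub>R b) \<le> f (p + 0 *\<^sub>R b)" if "\<bar>s\<bar> < d" for s
      using max line that by simp
    show "((\<lambda>s. f (p + s *\<^sub>R b)) has_real_derivative pderiv_dir f b (p + s *\<^sub>R b)) (at s)"
      if "\<bar>s\<bar> < d" for s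
      using has_real_derivative_pderiv_dir f_diff line that by blast
    show "((\<lambda>s. pderiv_dir f b (p + s *\<^sub>R b)) has_real_derivative
        pderiv_dir (pderiv_dir f b) b p) (at 0)"
      using has_real_derivative_pderiv_dir[of "pderiv_dir f b" p 0 b] assms(5) by simp
  qed
qed

text \<open>The stability operator of the cylinder, where \<open>|A|\<^sup>2 + 1/2 = 1\<close>, acting on ambient functions.\<close>
definition shrinker_op :: "('c::euclidean_space \<Rightarrow> real) \<Rightarrow> 'c \<Rightarrow> real" where
  "shrinker_op f p = laplacian f p - 1/2 * frechet_derivative f (at p) p + f p"

lemma laplacian_nonpos_at_local_max:
  fixes f :: "'c::euclidean_space \<Rightarrow> real"
  assumes "open W" "p \<in> W" "\<And>q. q \<in> W \<Longrightarrow> f q \<le> f p"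
    and diff: "f differentiable_on W"
    and diff2: "\<And>b. b \<in> Basis \<Longrightarrow> pderiv_dir f b differentiable at p"
  shows "laplacian f p \<le> 0"
  unfolding laplacian_def
proof (rule sum_nonpos)
  have "f differentiable at q" if "q \<in> W" for q
    using diff \<open>open W\<close> that differentiable_on_eq_differentiable_at by blast
  then show "pderiv_dir (pderiv_dir f b) b p \<le> 0" if "b \<in> Basis" for b
    using pderiv_dir2_nonpos_at_local_max[where f = f, OF assms(1-3)] diff2[OF that] by blast
qed

lemma shrinker_op_nonpos_at_local_max:
  fixes f :: "'c::euclidean_space \<Rightarrow> real"
  assumes W: "open W" "p \<in> W" and max: "\<And>q. q \<in> W \<Longrightarrow> f q \<le> f p" and "f p \<le> 0"
    and diff: "f differentiable_on W"
    and diff2: "\<And>b. b \<in> Basis \<Longrightarrow> pderiv_dir f b differentiable at p"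
  shows "shrinker_op f p \<le> 0"
proof -
  have "f differentiable at p"
    using diff W differentiable_on_eq_differentiable_at by blast
  then have "(f has_derivative frechet_derivative f (at p)) (at p)"
    by (rule frechet_derivative_works[THEN iffD1])
  then have "frechet_derivative f (at p) = (\<lambda>v. 0)"
    by (rule differential_zero_maxmin[OF \<open>p \<in> W\<close> \<open>open W\<close>]) (use max in blast)
  moreover have "laplacian f p \<le> 0"
    by (rule laplacian_nonpos_at_local_max[OF W max diff diff2])
  ultimately show ?thesis
    using \<open>f p \<le> 0\<close> by (simp add: shrinker_op_def)
qed

lemma frechet_derivative_diff_scaled:
  fixes f g :: "'c::euclidean_space \<Rightarrow> real"
  assumes "f differentiable at p" "g differentiable at p"
  shows "frechet_derivative (\<lambda>q. f q - c * g q) (at p) k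
       = frechet_derivative f (at p) k - c * frechet_derivative g (at p) k"
proof -
  have "((\<lambda>q. f q - c * g q) has_derivative
      (\<lambda>k. frechet_derivative f (at p) k - c * frechet_derivative g (at p) k)) (at p)"
    using assms[unfolded frechet_derivative_works] by (intro derivative_eq_intros) auto
  then show ?thesis
    by (simp add: frechet_derivative_at[symmetric])
qed

lemma has_derivative_pderiv_dir_diff_scaled:
  fixes f g :: "'c::euclidean_space \<Rightarrow> real"
  assumes W: "open W" "p \<in> W" and diff: "f differentiable_on W" "g differentiable_on W"
    and f': "pderiv_dir f b differentiable at p" and g': "pderiv_dir g b differentiable at p"
  shows "(pderiv_dir (\<lambda>q. f q - c * g q) b has_derivative
      (\<lambda>k. pderiv_dir (pderiv_dir f b) k p - c * pderiv_dir (pderiv_dir g b) k p)) (at p)"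
proof (rule has_derivative_transform_within_open[OF _ W])
  show "((\<lambda>q. pderiv_dir f b q - c * pderiv_dir g b q) has_derivative
      (\<lambda>k. pderiv_dir (pderiv_dir f b) k p - c * pderiv_dir (pderiv_dir g b) k p)) (at p)"
    using f'[unfolded frechet_derivative_works] g'[unfolded frechet_derivative_works]
    unfolding pderiv_dir_def[of "pderiv_dir _ b"] by (intro derivative_eq_intros) auto
  show "pderiv_dir f b q - c * pderiv_dir g b q = pderiv_dir (\<lambda>q. f q - c * g q) b q"
    if "q \<in> W" for q
  proof -
    have "f differentiable at q" "g differentiable at q"
      using diff \<open>open W\<close> that differentiable_on_eq_differentiable_at by blast+
    then show ?thesis
      unfolding pderiv_dir_def by (simp add: frechet_derivative_diff_scaled)
  qed
qed

lemma shrinker_op_diff_scaled: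
  fixes f g :: "'c::euclidean_space \<Rightarrow> real"
  assumes W: "open W" "p \<in> W" and diff: "f differentiable_on W" "g differentiable_on W"
    and diff2: "\<And>b. b \<in> Basis \<Longrightarrow> pderiv_dir f b differentiable at p"
      "\<And>b. b \<in> Basis \<Longrightarrow> pderiv_dir g b differentiable at p"
  shows "shrinker_op (\<lambda>q. f q - c * g q) p = shrinker_op f p - c * shrinker_op g p"
proof -
  have "f differentiable at p" "g differentiable at p"
    using diff W differentiable_on_eq_differentiable_at by blast+
  have second: "pderiv_dir (pderiv_dir (\<lambda>q. f q - c * g q) b) b p
      = pderiv_dir (pderiv_dir f b) b p - c * pderiv_dir (pderiv_dir g b) b p" if "b \<in> Basis" for b
    using frechet_derivative_at[OF has_derivative_pderiv_dir_diff_scaled[where c = c,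
          OF W diff diff2(1)[OF that] diff2(2)[OF that]], symmetric]
    unfolding pderiv_dir_def[of "pderiv_dir _ b"] by simp
  have "laplacian (\<lambda>q. f q - c * g q) p
      = (\<Sum>b\<in>Basis. pderiv_dir (pderiv_dir f b) b p - c * pderiv_dir (pderiv_dir g b) b p)"
    unfolding laplacian_def by (rule sum.cong) (simp_all add: second)
  also have "\<dots> = laplacian f p - c * laplacian g p"
    by (simp add: laplacian_def sum_subtractf sum_distrib_left)
  finally have laplacian_diff: "laplacian (\<lambda>q. f q - c * g q) p = laplacian f p - c * laplacian g p" .
  show ?thesis
    unfolding shrinker_op_def laplacian_diff
      frechet_derivative_diff_scaled[OF \<open>f differentiable at p\<close> \<open>g differentiable at p\<close>]
    by (simp add: algebra_simps)
qed

lemma shrinker_op_le_at_touching_point: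
  fixes f g :: "'c::euclidean_space \<Rightarrow> real"
  assumes W: "open W" "p \<in> W" and diff: "f differentiable_on W" "g differentiable_on W"
    and diff2: "\<And>b. b \<in> Basis \<Longrightarrow> pderiv_dir f b differentiable at p"
      "\<And>b. b \<in> Basis \<Longrightarrow> pderiv_dir g b differentiable at p"
    and below: "\<And>q. q \<in> W \<Longrightarrow> f q \<le> c * g q" and touch: "f p = c * g p"
  shows "shrinker_op f p \<le> c * shrinker_op g p"
proof -
  let ?h = "\<lambda>q. f q - c * g q"
  have "shrinker_op ?h p \<le> 0"
  proof (rule shrinker_op_nonpos_at_local_max[OF W])
    show "?h differentiable_on W"
      using diff by (intro derivative_intros)
    show "pderiv_dir ?h b differentiable at p" if "b \<in> Basis" for b
      using has_derivative_pderiv_dir_diff_scaled[OF W diff diff2(1)[OF that] diff2(2)[OF that]]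
      unfolding differentiable_def by blast
  qed (use below touch in auto)
  then show ?thesis
    using shrinker_op_diff_scaled[OF W diff diff2] by simp
qed

lemma touching_multiple_exists:
  fixes f g :: "'c::topological_space \<Rightarrow> real"
  assumes "compact K" "continuous_on K f" "continuous_on K g"
    and g_pos: "\<And>q. q \<in> K \<Longrightarrow> g q > 0" and "q\<^sub>0 \<in> K" "f q\<^sub>0 > 0"
  shows "\<exists>p\<in>K. \<exists>c>0. f p = c * g p \<and> (\<forall>q\<in>K. f q \<le> c * g q)"
proof -
  have "\<forall>q\<in>K. g q \<noteq> 0"
    using g_pos by (metis less_irrefl)
  then have "continuous_on K (\<lambda>q. f q / g q)"
    using assms(2,3) by (intro continuous_intros)
  then obtain p where "p \<in> K" and max: "\<And>q. q \<in> K \<Longrightarrow> f q / g q \<le> f p / g p"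
    using continuous_attains_sup[OF \<open>compact K\<close>] \<open>q\<^sub>0 \<in> K\<close> by blast
  have "f p / g p > 0"
    using max[OF \<open>q\<^sub>0 \<in> K\<close>] \<open>f q\<^sub>0 > 0\<close> g_pos[OF \<open>q\<^sub>0 \<in> K\<close>] by (smt (verit) divide_pos_pos)
  moreover have "f p = f p / g p * g p"
    using g_pos[OF \<open>p \<in> K\<close>] by simp
  moreover have "f q \<le> f p / g p * g q" if "q \<in> K" for q
    using max[OF that] g_pos[OF that] by (simp add: divide_le_eq mult.commute)
  ultimately show ?thesis
    using \<open>p \<in> K\<close> by blast
qed

lemma cyl_rad_pos: "DIM('a::euclidean_space) \<ge> 2 \<Longrightarrow> cyl_rad TYPE('a) > 0"
  by (simp add: cyl_rad_def)

lemma cyl_Asq_eq_half: "DIM('a::euclidean_space) \<ge> 2 \<Longrightarrow> cyl_Asq TYPE('a) = 1/2"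
  by (simp add: cyl_Asq_def cyl_rad_def)

lemma hom_ext_on_cylinder:
  fixes x :: "'a::euclidean_space"
  assumes "norm x = cyl_rad TYPE('a)"
  shows "hom_ext u (x, y) = u (x, y)"
  using assms[symmetric] by (cases "x = 0") (simp_all add: hom_ext_def)

lemma stab_op_eq_shrinker_op:
  assumes "DIM('a::euclidean_space) \<ge> 2" "norm (fst p) = cyl_rad TYPE('a)"
  shows "stab_op u p = shrinker_op (hom_ext u) (p :: 'a \<times> 'b::euclidean_space)"
  using assms hom_ext_on_cylinder[of "fst p" u "snd p"]
  by (simp add: stab_op_def shrinker_op_def cyl_Asq_eq_half)

lemma cyl_cone_sphere_times:
  assumes "DIM('a::euclidean_space) \<ge> 2"
  shows "cyl_cone {(x, y). x \<in> sphere (0::'a) (cyl_rad TYPE('a)) \<and> y \<in> H}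
    = {(x, y). x \<noteq> 0 \<and> (y :: 'b::euclidean_space) \<in> H}"
  using cyl_rad_pos[OF assms] by (auto simp: cyl_cone_def)

lemma hom_ext_radial:
  fixes x :: "'a::euclidean_space"
  assumes "DIM('a) \<ge> 2" "x \<noteq> 0"
  shows "hom_ext u (x, y) = hom_ext u (cyl_rad TYPE('a) *\<^sub>R (x /\<^sub>R norm x), y)"
proof -
  have on_cylinder: "norm (cyl_rad TYPE('a) *\<^sub>R (x /\<^sub>R norm x)) = cyl_rad TYPE('a)"
    using cyl_rad_pos[OF assms(1)] assms(2) by simp
  show ?thesis
    unfolding hom_ext_on_cylinder[OF on_cylinder] by (simp add: hom_ext_def)
qed

lemma touching_point_on_cylinder:
  fixes \<phi> :: "'b::euclidean_space \<Rightarrow> real" and u :: "'a::euclidean_space \<times> 'b \<Rightarrow> real"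
  defines "R \<equiv> cyl_rad TYPE('a)"
  assumes "DIM('a) \<ge> 2" "compact Y" "continuous_on Y \<phi>" "y\<^sub>0 \<in> Y" "\<phi> y\<^sub>0 > 0"
    and u_cont: "continuous_on (sphere 0 R \<times> Y) u"
    and u_pos: "\<And>q. q \<in> sphere 0 R \<times> Y \<Longrightarrow> u q > 0"
  shows "\<exists>p c. p \<in> sphere 0 R \<times> Y \<and> \<phi> (snd p) > 0 \<and> c > 0 \<and> \<phi> (snd p) = c * hom_ext u p
    \<and> (\<forall>q. fst q \<noteq> 0 \<and> snd q \<in> Y \<longrightarrow> \<phi> (snd q) \<le> c * hom_ext u q)"
proof -
  let ?K = "sphere (0::'a) R \<times> Y"
  have "R > 0"
    using cyl_rad_pos[OF assms(2)] by (simp add: R_def)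
  obtain a :: 'a where "norm a = R"
    using \<open>R > 0\<close> vector_choose_size by (metis less_le)
  have "compact ?K"
    by (intro compact_Times compact_sphere \<open>compact Y\<close>)
  have "continuous_on ?K snd"
    by (intro continuous_intros)
  then have "continuous_on ?K (\<lambda>q. \<phi> (snd q))"
    by (rule continuous_on_compose2[OF \<open>continuous_on Y \<phi>\<close>]) auto
  have "(a, y\<^sub>0) \<in> ?K"
    using \<open>norm a = R\<close> \<open>y\<^sub>0 \<in> Y\<close> by simp
  from touching_multiple_exists[OF \<open>compact ?K\<close> \<open>continuous_on ?K (\<lambda>q. \<phi> (snd q))\<close>
      u_cont u_pos this] \<open>\<phi> y\<^sub>0 > 0\<close>
  have "\<exists>p\<in>?K. \<exists>c>0. \<phi> (snd p) = c * u p \<and> (\<forall>q\<in>?K. \<phi> (snd q) \<le> c * u q)"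
    by simp
  then obtain p c where "p \<in> ?K" "c > 0" and touch: "\<phi> (snd p) = c * u p"
    and below: "\<And>q. q \<in> ?K \<Longrightarrow> \<phi> (snd q) \<le> c * u q"
    by blast
  have hom_ext_u: "hom_ext u q = u q" if "q \<in> ?K" for q
    using that by (cases q) (simp add: R_def hom_ext_on_cylinder)
  \<comment> \<open>\<open>hom_ext u\<close> is constant along rays, so the bound on the compact set holds on the whole cone.\<close>
  have "\<phi> (snd q) \<le> c * hom_ext u q" if "fst q \<noteq> 0" "snd q \<in> Y" for q
  proof -
    let ?q' = "(R *\<^sub>R (fst q /\<^sub>R norm (fst q)), snd q)"
    have "?q' \<in> ?K"
      using that \<open>R > 0\<close> by simp
    have "hom_ext u q = hom_ext u ?q'"
      using hom_ext_radial[OF assms(2) \<open>fst q \<noteq> 0\<close>, of u "snd q"] by (simp only: R_def prod.collapse)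
    also have "\<dots> = u ?q'"
      by (rule hom_ext_u[OF \<open>?q' \<in> ?K\<close>])
    finally show ?thesis
      using below[OF \<open>?q' \<in> ?K\<close>] by simp
  qed
  moreover have "\<phi> (snd p) > 0"
    using touch \<open>c > 0\<close> u_pos[OF \<open>p \<in> ?K\<close>] by simp
  ultimately show ?thesis
    using \<open>p \<in> ?K\<close> \<open>c > 0\<close> touch hom_ext_u[OF \<open>p \<in> ?K\<close>]
    by (intro exI[of _ p] exI[of _ c]) auto
qed

lemma not_stable_region_if_strict_subsolution:
  fixes \<phi> :: "'b::euclidean_space \<Rightarrow> real" and Y H :: "'b set"
  assumes "DIM('a::euclidean_space) \<ge> 2"
    and "compact Y" "Y \<subseteq> H" "y\<^sub>0 \<in> Y" "\<phi> y\<^sub>0 > 0"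
    and interior: "\<And>y. y \<in> Y \<Longrightarrow> \<phi> y > 0 \<Longrightarrow> y \<in> interior Y"
    and diff: "\<And>q. (\<lambda>q::'a \<times> 'b. \<phi> (snd q)) differentiable at q"
    and diff2: "\<And>b q. pderiv_dir (\<lambda>q::'a \<times> 'b. \<phi> (snd q)) b differentiable at q"
    and subsolution: "\<And>q::'a \<times> 'b. snd q \<in> Y \<Longrightarrow> \<phi> (snd q) > 0
        \<Longrightarrow> shrinker_op (\<lambda>q. \<phi> (snd q)) q > 0"
  shows "\<not> stable_region {(x, y). x \<in> sphere (0::'a) (cyl_rad TYPE('a)) \<and> y \<in> H}"
    (is "\<not> stable_region ?\<Omega>")
proof
  define \<Psi> where "\<Psi> = (\<lambda>q::'a \<times> 'b. \<phi> (snd q))"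
  define W where "W = {q::'a \<times> 'b. fst q \<noteq> 0 \<and> snd q \<in> interior Y}"
  let ?K = "sphere (0::'a) (cyl_rad TYPE('a)) \<times> Y"
  assume "stable_region ?\<Omega>"
  then obtain u where C2: "C2_on (cyl_cone ?\<Omega>) (hom_ext u)"
    and u: "\<And>p. p \<in> ?\<Omega> \<Longrightarrow> u p > 0 \<and> stab_op u p = 0"
    unfolding stable_region_def by blast
  have cone: "cyl_cone ?\<Omega> = {(x, y). x \<noteq> 0 \<and> y \<in> H}"
    by (rule cyl_cone_sphere_times[OF assms(1)])
  have "?K \<subseteq> ?\<Omega>"
    using \<open>Y \<subseteq> H\<close> by auto
  have "continuous_on ?K (hom_ext u)"
    using C2 cyl_rad_pos[OF assms(1)] \<open>Y \<subseteq> H\<close> unfolding C2_on_def cone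
    by (elim conjE differentiable_imp_continuous_on[THEN continuous_on_subset]) auto
  then have "continuous_on ?K u"
    by (rule continuous_on_cong[THEN iffD1, rotated 2]) (auto simp: hom_ext_on_cylinder)
  moreover have "continuous_on Y \<phi>"
  proof (intro continuous_at_imp_continuous_on ballI)
    fix y
    have "isCont (\<lambda>q::'a \<times> 'b. \<phi> (snd q)) (0, y)"
      using diff differentiable_imp_continuous_within by blast
    then have "isCont ((\<lambda>q::'a \<times> 'b. \<phi> (snd q)) \<circ> (\<lambda>y'. (0, y'))) y"
      by (intro continuous_at_compose continuous_intros) simp
    then show "isCont \<phi> y"
      by (simp add: o_def)
  qed
  ultimately obtain p c where "p \<in> ?K" "\<phi> (snd p) > 0" "c > 0" and touch: "\<Psi> p = c * hom_ext u p"
    and below: "\<And>q. fst q \<noteq> 0 \<Longrightarrow> snd q \<in> Y \<Longrightarrow> \<Psi> q \<le> c * hom_ext u q"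
    using touching_point_on_cylinder[where \<phi> = \<phi> and u = u, OF assms(1,2) _ \<open>y\<^sub>0 \<in> Y\<close> \<open>\<phi> y\<^sub>0 > 0\<close>] u \<open>?K \<subseteq> ?\<Omega>\<close>
    unfolding \<Psi>_def by blast
  have "open W"
    unfolding W_def by (intro open_Collect_conj open_Collect_neq continuous_intros
        open_vimage[of "interior Y" snd, unfolded vimage_def]) auto
  have "p \<in> W"
    using \<open>p \<in> ?K\<close> \<open>\<phi> (snd p) > 0\<close> cyl_rad_pos[OF assms(1)] interior by (auto simp: W_def)
  have "W \<subseteq> cyl_cone ?\<Omega>"
    unfolding cone using \<open>Y \<subseteq> H\<close> interior_subset[of Y] by (auto simp: W_def)
  then have "hom_ext u differentiable_on W"
    "\<And>b. b \<in> Basis \<Longrightarrow> pderiv_dir (hom_ext u) b differentiable at p"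
    using C2 \<open>open W\<close> \<open>p \<in> W\<close> unfolding C2_on_def
    by (meson differentiable_on_subset differentiable_on_eq_differentiable_at)+
  moreover have "\<Psi> differentiable_on W"
    using diff unfolding \<Psi>_def by (intro differentiable_at_imp_differentiable_on)
  moreover have "\<Psi> q \<le> c * hom_ext u q" if "q \<in> W" for q
    using below[of q] that interior_subset[of Y] unfolding W_def by blast
  ultimately have "shrinker_op \<Psi> p \<le> c * shrinker_op (hom_ext u) p"
    using shrinker_op_le_at_touching_point[OF \<open>open W\<close> \<open>p \<in> W\<close>] diff2 touch
    unfolding \<Psi>_def by blast
  also have "shrinker_op (hom_ext u) p = 0"
    using stab_op_eq_shrinker_op[OF assms(1), of p u] u[of p] \<open>p \<in> ?K\<close> \<open>?K \<subseteq> ?\<Omega>\<close> by auto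
  finally show False
    using subsolution[of p] \<open>p \<in> ?K\<close> \<open>\<phi> (snd p) > 0\<close> by (auto simp: \<Psi>_def)
qed

lemma has_derivative_real_compose:
  fixes f :: "'c::real_normed_vector \<Rightarrow> real"
  assumes "\<And>t. (g has_real_derivative g' t) (at t)" "(f has_derivative f') (at q)"
  shows "((\<lambda>x. g (f x)) has_derivative (\<lambda>h. g' (f q) * f' h)) (at q)"
  using has_derivative_compose[OF assms(2) assms(1)[of "f q", unfolded has_field_derivative_def]]
  by (simp add: mult.commute)

definition cutoff :: "real \<Rightarrow> real" where
  "cutoff t = t * (t - 1/2) * (8 - t)"

definition cutoff' :: "real \<Rightarrow> real" where
  "cutoff' t = 17 * t - 3 * t^2 - 4"

definition cutoff'' :: "real \<Rightarrow> real" where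
  "cutoff'' t = 17 - 6 * t"

lemma cutoff_deriv: "(cutoff has_real_derivative cutoff' t) (at t)"
  unfolding cutoff_def cutoff'_def
  by (auto intro!: derivative_eq_intros simp: algebra_simps power2_eq_square)

lemma cutoff'_deriv: "(cutoff' has_real_derivative cutoff'' t) (at t)"
  unfolding cutoff'_def cutoff''_def
  by (auto intro!: derivative_eq_intros simp: algebra_simps power2_eq_square)

lemma cutoff_bounds:
  assumes "1/2 < t" "t < 8"
  shows "0 < cutoff t" "cutoff t \<le> 512"
proof -
  show "0 < cutoff t"
    using assms by (simp add: cutoff_def)
  have "t * (t - 1/2) \<le> 8 * 8"
    using assms by (intro mult_mono) auto
  then have "t * (t - 1/2) * (8 - t) \<le> (8 * 8) * 8"
    using assms by (intro mult_mono) auto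
  then show "cutoff t \<le> 512"
    by (simp add: cutoff_def)
qed

lemma cutoff_shrinker_op_ge:
  assumes "0 \<le> t" "t \<le> 8"
  shows "cutoff'' t - 1/2 * t * cutoff' t + cutoff t \<ge> 4"
proof -
  have "cutoff'' t - 1/2 * t * cutoff' t + cutoff t = 1/2 * t^3 - 8 * t + 17"
    by (simp add: cutoff_def cutoff'_def cutoff''_def algebra_simps power2_eq_square power3_eq_cube)
  moreover have "(t - 23/10)^2 * (t + 46/10) = t^3 - 1587/100 * t + 24334/1000"
    by (simp add: power2_eq_square power3_eq_cube field_simps)
  moreover have "0 \<le> (t - 23/10)^2 * (t + 46/10)"
    using assms by simp
  ultimately show ?thesis
    using assms by linarith
qed

definition test_fun :: "'b::euclidean_space \<Rightarrow> real \<Rightarrow> 'b \<Rightarrow> real" where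
  "test_fun e M y = cutoff (e \<bullet> y) * (M - y \<bullet> y + (e \<bullet> y)^2)"

definition test_fun_deriv :: "'b::euclidean_space \<Rightarrow> real \<Rightarrow> 'b \<Rightarrow> 'b \<Rightarrow> real" where
  "test_fun_deriv e M y w = cutoff' (e \<bullet> y) * (e \<bullet> w) * (M - y \<bullet> y + (e \<bullet> y)^2)
     + cutoff (e \<bullet> y) * (- 2 * (y \<bullet> w) + 2 * (e \<bullet> y) * (e \<bullet> w))"

definition test_fun_deriv2 :: "'b::euclidean_space \<Rightarrow> real \<Rightarrow> 'b \<Rightarrow> 'b \<Rightarrow> 'b \<Rightarrow> real" where
  "test_fun_deriv2 e M y w k = cutoff'' (e \<bullet> y) * (e \<bullet> k) * (e \<bullet> w) * (M - y \<bullet> y + (e \<bullet> y)^2)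
     + cutoff' (e \<bullet> y) * (e \<bullet> w) * (- 2 * (y \<bullet> k) + 2 * (e \<bullet> y) * (e \<bullet> k))
     + cutoff' (e \<bullet> y) * (e \<bullet> k) * (- 2 * (y \<bullet> w) + 2 * (e \<bullet> y) * (e \<bullet> w))
     + cutoff (e \<bullet> y) * (- 2 * (k \<bullet> w) + 2 * (e \<bullet> k) * (e \<bullet> w))"

definition test_box :: "'b::euclidean_space \<Rightarrow> real \<Rightarrow> 'b set" where
  "test_box e M = {y. 1/2 \<le> e \<bullet> y \<and> e \<bullet> y \<le> 8 \<and> y \<bullet> y - (e \<bullet> y)^2 \<le> M}"

lemma has_derivative_test_fun_snd:
  "((\<lambda>q. test_fun e M (snd q)) has_derivative (\<lambda>k. test_fun_deriv e M (snd q) (snd k))) (at q)"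
  unfolding test_fun_def test_fun_deriv_def
  by (rule derivative_eq_intros refl has_derivative_real_compose[OF cutoff_deriv] | simp)+
    (simp add: algebra_simps inner_commute power2_eq_square)

lemma has_derivative_test_fun_deriv_snd:
  "((\<lambda>q. test_fun_deriv e M (snd q) (snd w)) has_derivative
      (\<lambda>k. test_fun_deriv2 e M (snd q) (snd w) (snd k))) (at q)"
  unfolding test_fun_deriv_def test_fun_deriv2_def
  by (rule derivative_eq_intros refl has_derivative_real_compose[OF cutoff_deriv]
      has_derivative_real_compose[OF cutoff'_deriv] | simp)+
    (simp add: algebra_simps inner_commute power2_eq_square)

lemma pderiv_dir_test_fun_snd:
  "pderiv_dir (\<lambda>q. test_fun e M (snd q)) w = (\<lambda>q. test_fun_deriv e M (snd q) (snd w))"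
  unfolding pderiv_dir_def using has_derivative_test_fun_snd by (metis frechet_derivative_at)

lemma pderiv_dir2_test_fun_snd:
  "pderiv_dir (pderiv_dir (\<lambda>q. test_fun e M (snd q)) w) w q
    = test_fun_deriv2 e M (snd q) (snd w) (snd w)"
  unfolding pderiv_dir_test_fun_snd pderiv_dir_def
  using has_derivative_test_fun_deriv_snd by (metis frechet_derivative_at)

lemma sum_Basis_prod:
  fixes f :: "'a::euclidean_space \<times> 'b::euclidean_space \<Rightarrow> 'c::comm_monoid_add"
  shows "sum f Basis = (\<Sum>i\<in>Basis. f (i, 0)) + (\<Sum>i\<in>Basis. f (0, i))"
proof -
  have "inj_on (\<lambda>u. (u::'a, 0::'b)) Basis" "inj_on (\<lambda>u. (0::'a, u::'b)) Basis"
    by (auto intro!: inj_onI)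
  then show ?thesis
    unfolding Basis_prod_def by (subst sum.union_disjoint) (auto simp: sum.reindex)
qed

lemma laplacian_test_fun_snd:
  fixes e :: "'b::euclidean_space" and q :: "'a::euclidean_space \<times> 'b"
  assumes "e \<bullet> e = 1"
  defines "y \<equiv> snd q"
  shows "laplacian (\<lambda>q. test_fun e M (snd q)) q
    = cutoff'' (e \<bullet> y) * (M - y \<bullet> y + (e \<bullet> y)^2) - 2 * (real DIM('b) - 1) * cutoff (e \<bullet> y)"
proof -
  define P where "P = cutoff'' (e \<bullet> y) * (M - y \<bullet> y + (e \<bullet> y)^2) + 4 * cutoff' (e \<bullet> y) * (e \<bullet> y)
    + 2 * cutoff (e \<bullet> y)"
  have "laplacian (\<lambda>q::'a \<times> 'b. test_fun e M (snd q)) q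
      = (\<Sum>w\<in>(Basis::'b set). test_fun_deriv2 e M y w w)"
    unfolding laplacian_def pderiv_dir2_test_fun_snd y_def
    by (simp add: sum_Basis_prod test_fun_deriv2_def)
  also have "\<dots> = (\<Sum>w\<in>Basis. P * ((e \<bullet> w) * (e \<bullet> w))
      - 4 * cutoff' (e \<bullet> y) * ((e \<bullet> w) * (y \<bullet> w)) - 2 * cutoff (e \<bullet> y) * (w \<bullet> w))"
    unfolding test_fun_deriv2_def P_def by (simp add: algebra_simps inner_commute)
  also have "\<dots> = P * (\<Sum>w\<in>Basis. (e \<bullet> w) * (e \<bullet> w))
      - 4 * cutoff' (e \<bullet> y) * (\<Sum>w\<in>Basis. (e \<bullet> w) * (y \<bullet> w))
      - 2 * cutoff (e \<bullet> y) * (\<Sum>w\<in>(Basis::'b set). w \<bullet> w)"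
    by (simp add: sum_subtractf sum_distrib_left)
  also have "\<dots> = P * (e \<bullet> e) - 4 * cutoff' (e \<bullet> y) * (e \<bullet> y) - 2 * cutoff (e \<bullet> y) * real DIM('b)"
    by (simp add: euclidean_inner[symmetric])
  finally show ?thesis
    using assms by (simp add: P_def algebra_simps)
qed

text \<open>Writing \<open>t = e \<bullet> y\<close> and \<open>\<rho> = |y|\<^sup>2 - t\<^sup>2\<close>, one has
  \<open>L \<Phi> = (M - \<rho>) (cutoff'' t - t cutoff' t / 2 + cutoff t) + cutoff t (\<rho> - 2 (dim - 1))\<close>;
  the first factor is at least \<open>4\<close> and \<open>cutoff t \<le> 512\<close>, so \<open>M = 400 dim\<close> is large enough.\<close>
lemma shrinker_op_test_fun_pos:
  fixes e :: "'b::euclidean_space" and q :: "'a::euclidean_space \<times> 'b"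
  assumes e: "e \<bullet> e = 1"
    and t: "1/2 < e \<bullet> snd q" "e \<bullet> snd q < 8"
    and \<rho>: "snd q \<bullet> snd q - (e \<bullet> snd q)^2 < 400 * real DIM('b)"
  shows "shrinker_op (\<lambda>q. test_fun e (400 * real DIM('b)) (snd q)) q > 0"
proof -
  define M where "M = 400 * real DIM('b)"
  define y where "y = snd q"
  define t where "t = e \<bullet> y"
  define \<rho> where "\<rho> = y \<bullet> y - t^2"
  define d where "d = real DIM('b)"
  define Q where "Q = cutoff'' t - 1/2 * t * cutoff' t + cutoff t"
  have "\<rho> \<ge> 0"
    using Cauchy_Schwarz_ineq[of e y] e by (simp add: \<rho>_def t_def)
  have "d \<ge> 1"
    by (simp add: d_def DIM_positive Suc_le_eq)
  have "M - \<rho> > 0"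
    using \<rho> by (simp add: M_def \<rho>_def t_def y_def)
  have "Q \<ge> 4"
    unfolding Q_def by (rule cutoff_shrinker_op_ge) (use t in \<open>auto simp: t_def y_def\<close>)
  have g: "0 < cutoff t" "cutoff t \<le> 512"
    using cutoff_bounds t by (auto simp: t_def y_def)
  have "shrinker_op (\<lambda>q. test_fun e M (snd q)) q = (M - \<rho>) * Q + cutoff t * (\<rho> - 2 * (d - 1))"
    unfolding shrinker_op_def laplacian_test_fun_snd[OF e]
      frechet_derivative_at[OF has_derivative_test_fun_snd, symmetric]
    by (simp add: test_fun_deriv_def test_fun_def Q_def \<rho>_def d_def t_def y_def
        algebra_simps power2_eq_square)
  also have "\<dots> > 0"
  proof (cases "\<rho> \<ge> 2 * (d - 1)")
    case True
    have "(M - \<rho>) * Q > 0"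
      using \<open>M - \<rho> > 0\<close> \<open>Q \<ge> 4\<close> by simp
    moreover have "cutoff t * (\<rho> - 2 * (d - 1)) \<ge> 0"
      using True g by simp
    ultimately show ?thesis
      by linarith
  next
    case False
    then have "(M - \<rho>) * Q \<ge> 398 * d * 4"
      using \<open>Q \<ge> 4\<close> \<open>d \<ge> 1\<close> by (intro mult_mono) (auto simp: M_def d_def)
    moreover have "cutoff t * (2 * (d - 1)) \<le> 512 * (2 * d)"
      using g \<open>d \<ge> 1\<close> by (intro mult_mono) auto
    moreover have "cutoff t * \<rho> \<ge> 0"
      using g \<open>\<rho> \<ge> 0\<close> by simp
    ultimately show ?thesis
      using \<open>d \<ge> 1\<close> by (simp add: algebra_simps)
  qed
  finally show ?thesis
    by (simp add: M_def)
qed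

lemma test_fun_snd_differentiable:
  "(\<lambda>q::'a::euclidean_space \<times> 'b::euclidean_space. test_fun e M (snd q)) differentiable at q"
  using has_derivative_test_fun_snd unfolding differentiable_def by blast

lemma pderiv_dir_test_fun_snd_differentiable:
  "pderiv_dir (\<lambda>q::'a::euclidean_space \<times> 'b::euclidean_space. test_fun e M (snd q)) w
    differentiable at q"
  unfolding pderiv_dir_test_fun_snd differentiable_def
  using has_derivative_test_fun_deriv_snd by blast

lemma test_box_subset_halfspace: "test_box e M \<subseteq> {y. e \<bullet> y > 0}"
  by (auto simp: test_box_def)

lemma compact_test_box: "compact (test_box e M)"
proof -
  have "closed (test_box e M)"
    unfolding test_box_def by (intro closed_Collect_conj closed_Collect_le continuous_intros)
  moreover have "norm y \<le> sqrt (M + 64)" if "y \<in> test_box e M" for y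
  proof -
    have "(e \<bullet> y)^2 \<le> 8^2"
      using that by (intro power_mono) (auto simp: test_box_def)
    then show ?thesis
      using that by (simp add: test_box_def norm_eq_sqrt_inner)
  qed
  ultimately show ?thesis
    unfolding compact_eq_bounded_closed bounded_iff by blast
qed

lemma test_fun_pos_in_test_box:
  assumes "y \<in> test_box e M" "test_fun e M y > 0"
  shows "1/2 < e \<bullet> y" "e \<bullet> y < 8" "y \<bullet> y - (e \<bullet> y)^2 < M"
proof -
  have "cutoff (e \<bullet> y) \<noteq> 0" "M - y \<bullet> y + (e \<bullet> y)^2 \<noteq> 0"
    using assms(2) by (auto simp: test_fun_def)
  then have "e \<bullet> y \<noteq> 1/2" "e \<bullet> y \<noteq> 8" "M - y \<bullet> y + (e \<bullet> y)^2 \<noteq> 0"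
    by (auto simp: cutoff_def)
  with assms(1) show "1/2 < e \<bullet> y" "e \<bullet> y < 8" "y \<bullet> y - (e \<bullet> y)^2 < M"
    by (auto simp: test_box_def)
qed

lemma test_fun_pos_imp_interior_test_box:
  assumes "y \<in> test_box e M" "test_fun e M y > 0"
  shows "y \<in> interior (test_box e M)"
proof -
  let ?T = "{y. 1/2 < e \<bullet> y \<and> e \<bullet> y < 8 \<and> y \<bullet> y - (e \<bullet> y)^2 < M}"
  have "open ?T"
    by (intro open_Collect_conj open_Collect_less continuous_intros)
  moreover have "?T \<subseteq> test_box e M"
    by (auto simp: test_box_def)
  moreover have "y \<in> ?T"
    using test_fun_pos_in_test_box[OF assms] by simp
  ultimately show ?thesis
    using interior_maximal by blast
qed

theorem proposition4p2:
  fixes v :: "'b::euclidean_space"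
  assumes "DIM('a::euclidean_space) \<ge> 2"
    and "v \<noteq> 0"
  shows "\<not> stable_region {(x, y). x \<in> sphere (0::'a) (cyl_rad TYPE('a)) \<and> v \<bullet> y > 0}"
proof -
  define e where "e = v /\<^sub>R norm v"
  define M where "M = 400 * real DIM('b)"
  have e: "e \<bullet> e = 1"
    using assms(2) by (simp add: e_def dot_square_norm)
  have "\<not> stable_region {(x, y). x \<in> sphere (0::'a) (cyl_rad TYPE('a)) \<and> y \<in> {y. v \<bullet> y > 0}}"
  proof (rule not_stable_region_if_strict_subsolution
      [where \<phi> = "test_fun e M" and Y = "test_box e M" and y\<^sub>0 = "4 *\<^sub>R e",
        OF assms(1) compact_test_box _ _ _ test_fun_pos_imp_interior_test_box
        test_fun_snd_differentiable pderiv_dir_test_fun_snd_differentiable])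
    show "test_box e M \<subseteq> {y. v \<bullet> y > 0}"
      using test_box_subset_halfspace[of e M] assms(2) by (auto simp: e_def zero_less_mult_iff)
    show "4 *\<^sub>R e \<in> test_box e M" "test_fun e M (4 *\<^sub>R e) > 0"
      using e by (simp_all add: test_box_def test_fun_def cutoff_def M_def power2_eq_square)
    show "shrinker_op (\<lambda>q. test_fun e M (snd q)) q > 0"
      if "snd q \<in> test_box e M" "test_fun e M (snd q) > 0" for q :: "'a \<times> 'b"
      using shrinker_op_test_fun_pos[OF e] test_fun_pos_in_test_box[OF that] by (simp add: M_def)
  qed
  then show ?thesis
    by simp
qed

end
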